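(* Let $\psi:\mathbb{H}\to\mathbb{H}$ be a linear isometry. The pair $(\varphi,\psi)=(\sigma_{\mathbb{H}},\psi)$ satisfies (i) $\varphi(\varphi(x)x)=\varphi(x)x$ for all $x$, (ii) $\varphi(\bar x\psi(x))=\bar x\psi(x)$ for all $x$, (iii) $\psi(\psi(y)\bar x+y\varphi(x))=\psi(y)\bar x+y\varphi(x)$ for all $x,y$, if and only if $\psi=\pm I_{\mathbb{H}}$.
   Context: $\sigma_{\mathbb{H}}(x)=\bar x$ is quaternion conjugation on $\mathbb{H}$; $I_{\mathbb{H}}$ is the identity. *)

theory Defs
  imports "HOL-Analysis.Analysis"
begin

text \<open>The quaternions H are modelled as the Euclidean space real^4, with coordinates
  (x$1, x$2, x$3, x$4) = (real part, i, j, k). The Euclidean norm on real^4 is the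
  quaternion norm.\<close>

type_synonym quat = "real ^ 4"

definition qmk :: "real \<Rightarrow> real \<Rightarrow> real \<Rightarrow> real \<Rightarrow> quat" where
  "qmk a b c d = (\<chi> i. if i = 1 then a else if i = 2 then b else if i = 3 then c else d)"

definition qmult :: "quat \<Rightarrow> quat \<Rightarrow> quat" where
  "qmult x y = qmk
     (x$1 * y$1 - x$2 * y$2 - x$3 * y$3 - x$4 * y$4)
     (x$1 * y$2 + x$2 * y$1 + x$3 * y$4 - x$4 * y$3)
     (x$1 * y$3 - x$2 * y$4 + x$3 * y$1 + x$4 * y$2)
     (x$1 * y$4 + x$2 * y$3 - x$3 * y$2 + x$4 * y$1)"

definition qconj :: "quat \<Rightarrow> quat" where
  "qconj x = qmk (x$1) (- x$2) (- x$3) (- x$4)"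

end

theory Submission
  imports Defs
begin

text \<open>Condition (i) holds for every quaternion, and (iii) is automatic for \<open>\<psi> = \<pm>I\<close>
  (for \<open>\<psi> = -I\<close> its argument vanishes), so everything rests on (ii). Since
  \<open>x (conj x v) = |x|\<^sup>2 v\<close>, condition (ii) says that \<open>\<psi> x\<close> is a real multiple of \<open>x\<close>
  for every \<open>x\<close>. A linear map for which every vector is an eigenvector is a scalar
  multiple of the identity, and as \<open>\<psi>\<close> is an isometry the scalar is \<open>\<pm>1\<close>.\<close>

lemma linear_eq_scaleR_if_all_eigenvectors:
  fixes f :: "'a::real_vector \<Rightarrow> 'a"
  assumes "linear f" and eigen: "\<And>x. \<exists>c. f x = c *\<^sub>R x"
  obtains c where "\<And>x. f x = c *\<^sub>R x"
proof (cases "\<exists>x0::'a. x0 \<noteq> 0")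
  case False
  then show ?thesis by (metis that scaleR_zero_right)
next
  case True
  then obtain x0 :: 'a where "x0 \<noteq> 0" by blast
  obtain a where a: "f x0 = a *\<^sub>R x0" using eigen by blast
  have "f y = a *\<^sub>R y" for y
  proof (cases "y = 0")
    case True
    then show ?thesis using \<open>linear f\<close> by (simp add: linear_0)
  next
    case False
    obtain b where b: "f y = b *\<^sub>R y" using eigen by blast
    obtain c where c: "f (x0 + y) = c *\<^sub>R (x0 + y)" using eigen by blast
    have "a *\<^sub>R x0 + b *\<^sub>R y = c *\<^sub>R x0 + c *\<^sub>R y"
      using a b c \<open>linear f\<close> by (simp add: linear_add scaleR_right_distrib)
    then have rel: "(a - c) *\<^sub>R x0 = (c - b) *\<^sub>R y"
      by (simp add: scaleR_diff_left algebra_simps)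
    show ?thesis
    proof (cases "a = c")
      case True
      then show ?thesis using rel b \<open>y \<noteq> 0\<close> by simp
    next
      case False
      \<comment> \<open>then \<open>y\<close> is a multiple of \<open>x0\<close> and so shares its eigenvalue\<close>
      with rel \<open>x0 \<noteq> 0\<close> have "c \<noteq> b" by auto
      with rel have "y = ((a - c) / (c - b)) *\<^sub>R x0"
        by (metis (no_types, lifting) divide_inverse_commute eq_vector_fraction_iff
            right_minus_eq scaleR_scaleR)
      then show ?thesis using a \<open>linear f\<close> by (simp add: linear_scale)
    qed
  qed
  then show ?thesis by (rule that)
qed

lemma qmk_nth [simp]:
  "qmk a b c d $ 1 = a" "qmk a b c d $ 2 = b" "qmk a b c d $ 3 = c" "qmk a b c d $ 4 = d"
  by (simp_all add: qmk_def)

lemma qconj_eq_self_iff: "qconj z = z \<longleftrightarrow> z$2 = 0 \<and> z$3 = 0 \<and> z$4 = 0"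
  by (auto simp add: qconj_def vec_eq_iff forall_4)

lemma power2_norm_quat: "norm (x::quat) ^ 2 = x$1^2 + x$2^2 + x$3^2 + x$4^2"
  by (simp only: power2_norm_eq_inner) (simp add: inner_vec_def sum_4 power2_eq_square)

lemma qconj_qmult_qconj_self: "qconj (qmult (qconj x) x) = qmult (qconj x) x"
  by (auto simp add: qconj_eq_self_iff qmult_def qconj_def algebra_simps)

lemma qmult_qconj_scaleR: "qconj (qmult (qconj x) (c *\<^sub>R x)) = qmult (qconj x) (c *\<^sub>R x)"
  by (auto simp add: qconj_eq_self_iff qmult_def qconj_def algebra_simps)

lemma qmult_uminus_left: "qmult (- y) z = - qmult y z"
  by (simp add: vec_eq_iff forall_4 qmult_def)

lemma qmult_qmult_qconj_left: "qmult x (qmult (qconj x) v) = (norm x ^ 2) *\<^sub>R v"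
  unfolding power2_norm_quat
  by (simp add: vec_eq_iff forall_4 qmult_def qconj_def algebra_simps power2_eq_square)

lemma qmult_real_right: "qmult x (qmk r 0 0 0) = r *\<^sub>R x"
  by (simp add: vec_eq_iff forall_4 qmult_def)

lemma eigenvector_if_qmult_qconj_real:
  assumes "qconj (qmult (qconj x) v) = qmult (qconj x) v" and "x \<noteq> 0"
  shows "\<exists>c. v = c *\<^sub>R x"
proof -
  define r where "r = qmult (qconj x) v $ 1"
  have "qmult (qconj x) v = qmk r 0 0 0"
    using assms(1) unfolding qconj_eq_self_iff by (simp add: r_def vec_eq_iff forall_4)
  then have scaled: "(norm x ^ 2) *\<^sub>R v = r *\<^sub>R x"
    by (metis qmult_qmult_qconj_left qmult_real_right)
  have "v = inverse (norm x ^ 2) *\<^sub>R ((norm x ^ 2) *\<^sub>R v)"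
    using \<open>x \<noteq> 0\<close> by simp
  also have "\<dots> = (r / norm x ^ 2) *\<^sub>R x"
    using scaled by (simp add: divide_inverse_commute)
  finally show ?thesis by blast
qed

theorem lemma11:
  fixes \<psi> :: "quat \<Rightarrow> quat"
  assumes "linear \<psi>" and "\<And>x. norm (\<psi> x) = norm x"
  shows "((\<forall>x. qconj (qmult (qconj x) x) = qmult (qconj x) x) \<and>
          (\<forall>x. qconj (qmult (qconj x) (\<psi> x)) = qmult (qconj x) (\<psi> x)) \<and>
          (\<forall>x y. \<psi> (qmult (\<psi> y) (qconj x) + qmult y (qconj x))
                   = qmult (\<psi> y) (qconj x) + qmult y (qconj x)))
         \<longleftrightarrow> (\<psi> = id \<or> \<psi> = (\<lambda>x. - x))"
    (is "?conditions \<longleftrightarrow> ?plus_minus_id")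
proof
  assume conds: ?conditions
  have "\<exists>c. \<psi> x = c *\<^sub>R x" for x
  proof (cases "x = 0")
    case True
    then show ?thesis using assms(1) by (simp add: linear_0)
  next
    case False
    then show ?thesis using conds eigenvector_if_qmult_qconj_real by blast
  qed
  then obtain c where c: "\<And>x. \<psi> x = c *\<^sub>R x"
    using assms(1) linear_eq_scaleR_if_all_eigenvectors by blast
  have "norm (c *\<^sub>R qmk 1 0 0 0) = norm (qmk 1 0 0 0 :: quat)"
    using assms(2) c by metis
  moreover have "qmk 1 0 0 0 \<noteq> (0::quat)"
    by (metis qmk_nth(1) zero_index zero_neq_one)
  ultimately have "\<bar>c\<bar> = 1" by simp
  then show ?plus_minus_id
    using c by (auto simp add: abs_if split: if_splits)
next
  assume ?plus_minus_id
  then show ?conditions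
    using qconj_qmult_qconj_self qmult_qconj_scaleR[of _ 1] qmult_qconj_scaleR[of _ "-1"]
    by (auto simp add: qmult_uminus_left)
qed

end
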